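(* Let $m<n$ be integers with $m\ge -1$ even, and let $p\in\Gamma_n$. Suppose $p\hat a=bqa$ for paths $\hat a,a,b$ and $q\in\Gamma_m$ (so that $q$ occurs in the path $p\hat a$, in which $p$ occurs as a suffix). Then $b\notin I$ if and only if the occurrence of $q$ lies inside $\sigma_{m+1}(p)$. In particular, in that case $q$ lies inside $p$. Dually, if $\hat b p=bqa$ with $q\in\Gamma_m$, then $a\notin I$ if and only if the occurrence of $q$ lies inside $\pi_{m+1}(p)$.
   Context: Let $\Bbbk$ be a field, $Q=(Q_0,Q_1,s,t)$ a finite quiver, and $A=\Bbbk Q/I$ a finite-dimensional monomial algebra, i.e. $I$ is an ideal generated by paths of length at least $2$. Paths are written from right to left: a path is $p=\alpha_n\cdots\alpha_1$ with arrows $\alpha_i$ and $t(\alpha_i)=s(\alpha_{i+1})$; vertices are the paths of length $0$ (trivial paths, also denoted $1$); $qp$ denotes concatenation when $t(p)=s(q)$. Let $\mathcal B$ be the set of paths not lying in $I$. If $p=bqa$ for paths $a,b,q$, then $q$ is a divisor of $p$; we write $q\le p$ to mean that $q$ is a divisor of $p$ at a fixed position (an occurrence). If $b$ is trivial, $q$ is a suffix; if $a$ is trivial, $q$ is a prefix; proper means $q\neq p$. For $n\ge -1$, a left $n$-ambiguity is a path $p$ with a decomposition $p=u_{-1}u_0u_1\cdots u_n$ such that $u_{-1}\in Q_0$, $u_0\in Q_1$, $u_i\in\mathcal B$ for all $i$, and for every $0\le i\le n-1$, $u_iu_{i+1}\in I$ while no proper suffix of $u_iu_{i+1}$ lies in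 $I$ (one writes $p=u_0\cdots u_n$). A right $n$-ambiguity is a path with a decomposition $p=v_n\cdots v_0v_{-1}$ with $v_{-1}\in Q_0$, $v_0\in Q_1$, $v_i\in\mathcal B$, and for $0\le i\le n-1$, $v_{i+1}v_i\in I$ while no proper prefix of $v_{i+1}v_i$ lies in $I$. A path is a left $n$-ambiguity iff it is a right $n$-ambiguity; such paths are called $n$-ambiguities, and $\Gamma_n$ denotes their set. Both decompositions of an $n$-ambiguity are unique. For $p\in\Gamma_n$ with left decomposition $u_0\cdots u_n$ and right decomposition $v_n\cdots v_0$, and $-1\le m\le n$, set $\sigma_m(p):=u_0\cdots u_m$ (a suffix of $p$ which is an $m$-ambiguity) and $\pi_m(p):=v_m\cdots v_0$ (a prefix of $p$ which is an $m$-ambiguity). *)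

theory Defs
  imports Main
begin

record ('v, 'a) quiver =
  verts :: "'v set"
  arrs  :: "'a set"
  srcA  :: "'a \<Rightarrow> 'v"
  tgtA  :: "'a \<Rightarrow> 'v"

text \<open>A path is a pair (source vertex, list of arrows in WRITTEN order).
  The path alpha_n ... alpha_1 (alpha_1 traversed first) is represented as
  (s(alpha_1), [alpha_n, ..., alpha_1]); the trivial path at v is (v, []).\<close>
type_synonym ('v, 'a) path = "'v \<times> 'a list"

definition len :: "('v, 'a) path \<Rightarrow> nat" where
  "len w = length (snd w)"

definition psrc :: "('v, 'a) path \<Rightarrow> 'v" where
  "psrc w = fst w"

definition ptgt :: "('v, 'a) quiver \<Rightarrow> ('v, 'a) path \<Rightarrow> 'v" where
  "ptgt Q w = (if snd w = [] then fst w else tgtA Q (hd (snd w)))"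

definition valid :: "('v, 'a) quiver \<Rightarrow> ('v, 'a) path \<Rightarrow> bool" where
  "valid Q w \<longleftrightarrow> fst w \<in> verts Q \<and> set (snd w) \<subseteq> arrs Q
     \<and> (snd w \<noteq> [] \<longrightarrow> srcA Q (last (snd w)) = fst w)
     \<and> (\<forall>i. Suc i < length (snd w) \<longrightarrow> srcA Q (snd w ! i) = tgtA Q (snd w ! Suc i))"

text \<open>Concatenation q p (p first, then q), meaningful when t(p) = s(q).\<close>
definition cat :: "('v, 'a) path \<Rightarrow> ('v, 'a) path \<Rightarrow> ('v, 'a) path" where
  "cat q p = (fst p, snd q @ snd p)"

definition composable :: "('v, 'a) quiver \<Rightarrow> ('v, 'a) path \<Rightarrow> ('v, 'a) path \<Rightarrow> bool" where
  "composable Q q p \<longleftrightarrow> valid Q q \<and> valid Q p \<and> ptgt Q p = psrc q"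

definition divisor :: "('v, 'a) quiver \<Rightarrow> ('v, 'a) path \<Rightarrow> ('v, 'a) path \<Rightarrow> bool" where
  "divisor Q q w \<longleftrightarrow> (\<exists>b a. composable Q q a \<and> composable Q b (cat q a) \<and> w = cat b (cat q a))"

definition is_suffix :: "('v, 'a) quiver \<Rightarrow> ('v, 'a) path \<Rightarrow> ('v, 'a) path \<Rightarrow> bool" where
  "is_suffix Q r w \<longleftrightarrow> (\<exists>a. composable Q r a \<and> w = cat r a)"

definition is_prefix :: "('v, 'a) quiver \<Rightarrow> ('v, 'a) path \<Rightarrow> ('v, 'a) path \<Rightarrow> bool" where
  "is_prefix Q r w \<longleftrightarrow> (\<exists>b. composable Q b r \<and> w = cat b r)"

text \<open>The monomial ideal I generated by the set of paths R: a path lies in I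
  iff it has a divisor in R.\<close>
definition inI :: "('v, 'a) quiver \<Rightarrow> ('v, 'a) path set \<Rightarrow> ('v, 'a) path \<Rightarrow> bool" where
  "inI Q R w \<longleftrightarrow> (\<exists>r\<in>R. divisor Q r w)"

definition Bpaths :: "('v, 'a) quiver \<Rightarrow> ('v, 'a) path set \<Rightarrow> ('v, 'a) path set" where
  "Bpaths Q R = {w. valid Q w \<and> \<not> inI Q R w}"

text \<open>Standing assumptions: finite quiver, I generated by paths of length at
  least 2, A = kQ/I finite-dimensional (finitely many paths outside I).\<close>
definition monomial_algebra :: "('v, 'a) quiver \<Rightarrow> ('v, 'a) path set \<Rightarrow> bool" where
  "monomial_algebra Q R \<longleftrightarrow> finite (verts Q) \<and> finite (arrs Q)
     \<and> (\<forall>\<alpha>\<in>arrs Q. srcA Q \<alpha> \<in> verts Q \<and> tgtA Q \<alpha> \<in> verts Q)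
     \<and> (\<forall>r\<in>R. valid Q r \<and> len r \<ge> 2)
     \<and> finite (Bpaths Q R)"

text \<open>Left n-ambiguity with left decomposition us = [u_{-1}, u_0, ..., u_n]
  (written order, p = u_{-1} u_0 ... u_n).\<close>
definition left_decomp :: "('v, 'a) quiver \<Rightarrow> ('v, 'a) path set \<Rightarrow> int \<Rightarrow>
    ('v, 'a) path \<Rightarrow> ('v, 'a) path list \<Rightarrow> bool" where
  "left_decomp Q R n p us \<longleftrightarrow> n \<ge> -1 \<and> length us = nat (n + 2)
     \<and> valid Q p
     \<and> snd p = concat (map snd us) \<and> psrc p = psrc (last us)
     \<and> (\<forall>j. Suc j < length us \<longrightarrow> composable Q (us ! j) (us ! Suc j))
     \<and> len (us ! 0) = 0 \<and> (length us > 1 \<longrightarrow> len (us ! 1) = 1)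
     \<and> (\<forall>j < length us. us ! j \<in> Bpaths Q R)
     \<and> (\<forall>i. i + 2 < length us \<longrightarrow>
          inI Q R (cat (us ! Suc i) (us ! Suc (Suc i)))
          \<and> (\<forall>r. is_suffix Q r (cat (us ! Suc i) (us ! Suc (Suc i)))
                 \<and> r \<noteq> cat (us ! Suc i) (us ! Suc (Suc i)) \<longrightarrow> \<not> inI Q R r))"

text \<open>Right n-ambiguity with right decomposition vs = [v_{-1}, v_0, ..., v_n]
  (p = v_n ... v_0 v_{-1} in written order).\<close>
definition right_decomp :: "('v, 'a) quiver \<Rightarrow> ('v, 'a) path set \<Rightarrow> int \<Rightarrow>
    ('v, 'a) path \<Rightarrow> ('v, 'a) path list \<Rightarrow> bool" where
  "right_decomp Q R n p vs \<longleftrightarrow> n \<ge> -1 \<and> length vs = nat (n + 2)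
     \<and> valid Q p
     \<and> snd p = concat (map snd (rev vs)) \<and> psrc p = psrc (vs ! 0)
     \<and> (\<forall>j. Suc j < length vs \<longrightarrow> composable Q (vs ! Suc j) (vs ! j))
     \<and> len (vs ! 0) = 0 \<and> (length vs > 1 \<longrightarrow> len (vs ! 1) = 1)
     \<and> (\<forall>j < length vs. vs ! j \<in> Bpaths Q R)
     \<and> (\<forall>i. i + 2 < length vs \<longrightarrow>
          inI Q R (cat (vs ! Suc (Suc i)) (vs ! Suc i))
          \<and> (\<forall>r. is_prefix Q r (cat (vs ! Suc (Suc i)) (vs ! Suc i))
                 \<and> r \<noteq> cat (vs ! Suc (Suc i)) (vs ! Suc i) \<longrightarrow> \<not> inI Q R r))"

definition Gamma :: "('v, 'a) quiver \<Rightarrow> ('v, 'a) path set \<Rightarrow> int \<Rightarrow> ('v, 'a) path set" where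
  "Gamma Q R n = {p. \<exists>us. left_decomp Q R n p us}"

text \<open>sigma_m(p) = u_0 ... u_m (u_{-1} for m = -1), a suffix of p.\<close>
definition sigma :: "('v, 'a) quiver \<Rightarrow> ('v, 'a) path set \<Rightarrow> int \<Rightarrow> int \<Rightarrow>
    ('v, 'a) path \<Rightarrow> ('v, 'a) path" where
  "sigma Q R n m p = (let us = (THE us. left_decomp Q R n p us);
                          ws = take (nat (m + 2)) us
                      in (psrc (last ws), concat (map snd ws)))"

text \<open>pi_m(p) = v_m ... v_0 (v_{-1} for m = -1), a prefix of p.\<close>
definition pi_amb :: "('v, 'a) quiver \<Rightarrow> ('v, 'a) path set \<Rightarrow> int \<Rightarrow> int \<Rightarrow>
    ('v, 'a) path \<Rightarrow> ('v, 'a) path" where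
  "pi_amb Q R n m p = (let vs = (THE vs. right_decomp Q R n p vs);
                           ws = take (nat (m + 2)) vs
                       in (psrc p, concat (map snd (rev ws))))"

text \<open>Positional containment of occurrences inside one ambient path w
  (positions counted in written order, i.e. from the terminal end):
  the occurrence of q starting at offset k (w = b q a with len b = k) lies inside
  the occurrence of r starting at offset k' (w = b' r a' with len b' = k').\<close>
definition occ_inside :: "nat \<Rightarrow> ('v, 'a) path \<Rightarrow> nat \<Rightarrow> ('v, 'a) path \<Rightarrow> bool" where
  "occ_inside k q k' r \<longleftrightarrow> k' \<le> k \<and> k + len q \<le> k' + len r"

end

theory Submission
  imports Defs
begin

text \<open>Reading paths as words of arrows, the pieces of an ambiguity are cut greedily: each cut
  point is the first position at which a relation begun at the cut point two steps earlier is
  completed. Two greedy chains of cut points in one word cannot overtake each other: if one is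
  at or behind the other at some cut point, it still is two cut points later.

  Let the chain of p start at 0 and that of q at the start of q, i.e. after b. If b lies in I,
  then p completes its first relation inside b, so the chain of p stays ahead of that of q and q
  ends beyond sigma_{m+1}(p). If b does not lie in I, the first arrow of q lies before the
  second cut point of p, so the chain of q stays behind and q ends inside sigma_{m+1}(p). Both
  comparisons reach the last cut point of q, which has the odd index m + 1, in steps of two
  from its cut points 0 and 1 -- this is where the parity of m is needed.

  The dual statement follows by reversing all words, once one knows that every n-ambiguity also
  has a right decomposition: the greedy right decomposition interleaves with the left one and
  therefore also has n + 2 pieces.\<close>

section \<open>Paths and their arrow words\<close>

lemma valid_Nil: "valid Q (v, []) \<longleftrightarrow> v \<in> verts Q"
  by (simp add: valid_def)

lemma valid_Cons:
  "valid Q (v, \<alpha> # l) \<longleftrightarrow> \<alpha> \<in> arrs Q \<and> valid Q (v, l) \<and> srcA Q \<alpha> = ptgt Q (v, l)"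
proof (cases l)
  case Nil
  then show ?thesis by (auto simp: valid_def ptgt_def)
next
  case (Cons \<beta> l')
  have links: "(\<forall>i. Suc i < length (\<alpha> # l) \<longrightarrow> srcA Q ((\<alpha> # l) ! i) = tgtA Q ((\<alpha> # l) ! Suc i))
     \<longleftrightarrow> srcA Q \<alpha> = tgtA Q \<beta> \<and> (\<forall>i. Suc i < length l \<longrightarrow> srcA Q (l ! i) = tgtA Q (l ! Suc i))"
    using Cons by (auto simp: less_Suc_eq_0_disj nth_Cons' split: if_splits)
  show ?thesis
    unfolding valid_def fst_conv snd_conv links using Cons by (auto simp: ptgt_def)
qed

lemma ptgt_append: "ptgt Q (v, xs @ ys) = ptgt Q (ptgt Q (v, ys), xs)"
  by (auto simp: ptgt_def)

lemma valid_append: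
  assumes "\<forall>\<alpha>\<in>arrs Q. tgtA Q \<alpha> \<in> verts Q"
  shows "valid Q (v, xs @ ys) \<longleftrightarrow> valid Q (v, ys) \<and> valid Q (ptgt Q (v, ys), xs)"
proof (induction xs)
  case Nil
  have "valid Q (v, ys) \<Longrightarrow> ptgt Q (v, ys) \<in> verts Q"
    using assms by (cases ys) (auto simp: valid_def ptgt_def)
  then show ?case by (auto simp: valid_Nil)
next
  case (Cons \<alpha> xs)
  then show ?case by (auto simp: valid_Cons ptgt_append)
qed

lemma valid_cat:
  assumes "\<forall>\<alpha>\<in>arrs Q. tgtA Q \<alpha> \<in> verts Q" and "composable Q q p"
  shows "valid Q (cat q p)"
  using assms valid_append[OF assms(1), of "fst p" "snd q" "snd p"]
  by (simp add: composable_def psrc_def cat_def)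

lemma monomial_algebra_tgt: "monomial_algebra Q R \<Longrightarrow> \<forall>\<alpha>\<in>arrs Q. tgtA Q \<alpha> \<in> verts Q"
  by (simp add: monomial_algebra_def)

lemma monomial_algebra_relation_length: "monomial_algebra Q R \<Longrightarrow> \<forall>r\<in>snd ` R. 2 \<le> length r"
  unfolding monomial_algebra_def len_def by auto

definition slice :: "'a list \<Rightarrow> nat \<Rightarrow> nat \<Rightarrow> 'a list" where
  "slice x s k = take (k - s) (drop s x)"

lemma length_slice: "s \<le> k \<Longrightarrow> k \<le> length x \<Longrightarrow> length (slice x s k) = k - s"
  by (simp add: slice_def)

lemma slice_append_drop: "s \<le> k \<Longrightarrow> slice x s k @ drop k x = drop s x"
  by (metis append_take_drop_id drop_drop le_add_diff_inverse2 slice_def)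

lemma slice_append: "s \<le> t \<Longrightarrow> t \<le> k \<Longrightarrow> slice x s t @ slice x t k = slice x s k"
proof -
  assume "s \<le> t" "t \<le> k"
  then have "k - s = (t - s) + (k - t)" and "drop (t - s) (drop s x) = drop t x"
    by simp_all
  then show ?thesis
    unfolding slice_def by (metis take_add)
qed

lemma drop_slice: "drop t (slice x s k) = slice x (s + t) k"
  by (simp add: slice_def drop_take add.commute diff_diff_left)

lemma concat_slices_telescope:
  assumes "\<And>i j. i \<le> j \<Longrightarrow> j \<le> J \<Longrightarrow> g j \<le> g i"
  shows "concat (map (\<lambda>j. slice x (g j) (g (j - 1))) (rev [0..<Suc J])) = slice x (g J) (g 0)"
  using assms
proof (induction J)
  case 0
  then show ?case by (simp add: slice_def)
next
  case (Suc J)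
  then have "concat (map (\<lambda>j. slice x (g j) (g (j - 1))) (rev [0..<Suc (Suc J)]))
      = slice x (g (Suc J)) (g J) @ slice x (g J) (g 0)"
    by simp
  also have "\<dots> = slice x (g (Suc J)) (g 0)"
    using Suc.prems by (intro slice_append) auto
  finally show ?case .
qed

definition subpath :: "('v, 'a) quiver \<Rightarrow> ('v, 'a) path \<Rightarrow> nat \<Rightarrow> nat \<Rightarrow> ('v, 'a) path" where
  "subpath Q w k l = (ptgt Q (fst w, drop l (snd w)), slice (snd w) k l)"

lemma len_subpath: "k \<le> l \<Longrightarrow> l \<le> len w \<Longrightarrow> len (subpath Q w k l) = l - k"
  by (simp add: len_def subpath_def length_slice)

lemma subpath_whole: "subpath Q w 0 (len w) = w"
  by (simp add: subpath_def slice_def len_def ptgt_def)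

lemma subpath_valid:
  assumes "\<forall>\<alpha>\<in>arrs Q. tgtA Q \<alpha> \<in> verts Q" and "valid Q w" and "k \<le> l"
  shows "valid Q (subpath Q w k l)"
proof -
  have "snd w = take k (snd w) @ slice (snd w) k l @ drop l (snd w)"
    using slice_append_drop[OF \<open>k \<le> l\<close>] by (metis append_take_drop_id)
  then have "valid Q (fst w, take k (snd w) @ slice (snd w) k l @ drop l (snd w))"
    using \<open>valid Q w\<close> by (metis prod.collapse)
  then show ?thesis
    unfolding subpath_def valid_append[OF assms(1)] by blast
qed

lemma subpath_cat:
  assumes "\<forall>\<alpha>\<in>arrs Q. tgtA Q \<alpha> \<in> verts Q" and "valid Q w" and "j \<le> k" "k \<le> l"
  shows "composable Q (subpath Q w j k) (subpath Q w k l)"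
    and "cat (subpath Q w j k) (subpath Q w k l) = subpath Q w j l"
proof -
  have "ptgt Q (subpath Q w k l) = ptgt Q (fst w, slice (snd w) k l @ drop l (snd w))"
    unfolding subpath_def by (simp add: ptgt_append)
  also have "\<dots> = psrc (subpath Q w j k)"
    by (simp add: slice_append_drop[OF \<open>k \<le> l\<close>] subpath_def psrc_def)
  finally show "composable Q (subpath Q w j k) (subpath Q w k l)"
    using subpath_valid[OF assms(1,2)] assms(3,4) by (simp add: composable_def)
  show "cat (subpath Q w j k) (subpath Q w k l) = subpath Q w j l"
    using slice_append[OF assms(3,4)] by (simp add: cat_def subpath_def)
qed

lemma is_suffix_subpath:
  assumes "\<forall>\<alpha>\<in>arrs Q. tgtA Q \<alpha> \<in> verts Q" and "valid Q w" and "j \<le> len w"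
  shows "is_suffix Q (subpath Q w 0 j) w"
  using subpath_cat[OF assms(1,2), of 0 j "len w"] assms(3) unfolding is_suffix_def subpath_whole
  by (metis le0)

lemma is_prefix_subpath:
  assumes "\<forall>\<alpha>\<in>arrs Q. tgtA Q \<alpha> \<in> verts Q" and "valid Q w" and "t \<le> len w"
  shows "is_prefix Q (subpath Q w t (len w)) w"
  using subpath_cat[OF assms(1,2), of 0 t "len w"] assms(3) unfolding is_prefix_def subpath_whole
  by (metis le0)

definition has_factor :: "'a list set \<Rightarrow> 'a list \<Rightarrow> bool" where
  "has_factor S w \<longleftrightarrow> (\<exists>r\<in>S. \<exists>u v. w = u @ r @ v)"

lemma has_factor_append: "has_factor S w \<Longrightarrow> has_factor S (u @ w @ v)"
  unfolding has_factor_def by (metis append.assoc)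

lemma has_factor_length: "\<forall>r\<in>S. 2 \<le> length r \<Longrightarrow> has_factor S w \<Longrightarrow> 2 \<le> length w"
  unfolding has_factor_def by force

lemma has_factor_rev: "has_factor (rev ` S) (rev w) \<longleftrightarrow> has_factor S w"
proof
  assume "has_factor (rev ` S) (rev w)"
  then obtain r u v where "r \<in> S" "rev w = u @ rev r @ v"
    unfolding has_factor_def by blast
  then have "w = rev v @ r @ rev u" by (metis append.assoc rev_append rev_rev_ident)
  then show "has_factor S w" unfolding has_factor_def using \<open>r \<in> S\<close> by blast
next
  assume "has_factor S w"
  then obtain r u v where "r \<in> S" "w = u @ r @ v"
    unfolding has_factor_def by blast
  then have "rev w = rev v @ rev r @ rev u" by simp
  then show "has_factor (rev ` S) (rev w)" unfolding has_factor_def using \<open>r \<in> S\<close> by blast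
qed

lemma inI_iff_has_factor:
  assumes ma: "monomial_algebra Q R" and "valid Q w"
  shows "inI Q R w \<longleftrightarrow> has_factor (snd ` R) (snd w)"
proof
  assume "inI Q R w"
  then obtain r b a where "r \<in> R" "w = cat b (cat r a)"
    unfolding inI_def divisor_def by blast
  then show "has_factor (snd ` R) (snd w)"
    unfolding has_factor_def cat_def by auto
next
  note tgt = monomial_algebra_tgt[OF ma]
  assume "has_factor (snd ` R) (snd w)"
  then obtain r xs ys where r: "r \<in> R" and w: "snd w = xs @ snd r @ ys"
    unfolding has_factor_def by auto
  have "valid Q r" and "snd r \<noteq> []"
    using ma r unfolding monomial_algebra_def len_def by fastforce+
  define i where "i = length xs"
  define k where "k = length xs + length (snd r)"
  have k: "i \<le> k" "k \<le> len w"
    using w by (simp_all add: i_def k_def len_def)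
  have r_eq: "r = subpath Q w i k"
  proof -
    have "snd (subpath Q w i k) = snd r"
      using w by (simp add: subpath_def slice_def i_def k_def)
    moreover have "valid Q (subpath Q w i k)"
      using subpath_valid[OF tgt \<open>valid Q w\<close> k(1)] .
    ultimately show ?thesis
      using \<open>valid Q r\<close> \<open>snd r \<noteq> []\<close> by (metis prod.collapse valid_def)
  qed
  note pieces = subpath_cat[OF tgt \<open>valid Q w\<close>]
  have "composable Q r (subpath Q w k (len w))"
    and "composable Q (subpath Q w 0 i) (cat r (subpath Q w k (len w)))"
    and "w = cat (subpath Q w 0 i) (cat r (subpath Q w k (len w)))"
    using pieces[of i k "len w"] pieces[of 0 i "len w"] k subpath_whole[of Q w] r_eq by simp_all
  then have "divisor Q r w"
    unfolding divisor_def by blast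
  then show "inI Q R w" unfolding inI_def using r by blast
qed

definition factor_between :: "'a list set \<Rightarrow> 'a list \<Rightarrow> nat \<Rightarrow> nat \<Rightarrow> bool" where
  "factor_between S x s k \<longleftrightarrow> s \<le> k \<and> k \<le> length x \<and> has_factor S (slice x s k)"

lemma factor_between_mono_start:
  "s' \<le> s \<Longrightarrow> factor_between S x s k \<Longrightarrow> factor_between S x s' k"
  unfolding factor_between_def
  using slice_append[of s' s k x] has_factor_append[of S _ "slice x s' s" "[]"] by force

lemma factor_between_mono_end:
  "k \<le> k' \<Longrightarrow> k' \<le> length x \<Longrightarrow> factor_between S x s k \<Longrightarrow> factor_between S x s k'"
  unfolding factor_between_def
  using slice_append[of s k k' x] has_factor_append[of S _ "[]" "slice x k k'"] by force

lemma factor_between_length: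
  assumes "\<forall>r\<in>S. 2 \<le> length r" and "factor_between S x s k"
  shows "s + 2 \<le> k"
proof -
  have "2 \<le> length (slice x s k)"
    using assms has_factor_length unfolding factor_between_def by blast
  moreover have "length (slice x s k) \<le> k - s"
    unfolding slice_def by simp
  ultimately show ?thesis by linarith
qed

lemma inI_subpath_iff:
  assumes ma: "monomial_algebra Q R" and "valid Q p" and "s \<le> k" and "k \<le> len p"
  shows "inI Q R (subpath Q p s k) \<longleftrightarrow> factor_between (snd ` R) (snd p) s k"
  using inI_iff_has_factor[OF ma subpath_valid[OF monomial_algebra_tgt[OF ma] \<open>valid Q p\<close> \<open>s \<le> k\<close>]]
    assms(3,4) by (simp add: factor_between_def subpath_def len_def)

lemma proper_prefix_of_subpath_notin_I:
  assumes ma: "monomial_algebra Q R" and "valid Q p" and "s \<le> k" and "k \<le> len p"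
    and later: "\<forall>s' > s. \<not> factor_between (snd ` R) (snd p) s' k"
    and "is_prefix Q r (subpath Q p s k)" and "r \<noteq> subpath Q p s k"
  shows "\<not> inI Q R r"
proof
  assume "inI Q R r"
  obtain b where b: "composable Q b r" "subpath Q p s k = cat b r"
    using \<open>is_prefix Q r (subpath Q p s k)\<close> unfolding is_prefix_def by blast
  define t where "t = length (snd b)"
  have "t \<noteq> 0"
    using b(2) \<open>r \<noteq> subpath Q p s k\<close> by (auto simp: t_def cat_def)
  have "snd r = drop t (slice (snd p) s k)"
    using b(2) by (simp add: t_def cat_def subpath_def prod_eq_iff)
  also have "\<dots> = slice (snd p) (s + t) k"
    by (rule drop_slice)
  finally have "snd r = slice (snd p) (s + t) k" .
  moreover have "s + t \<le> k"
    using b(2) length_slice[OF \<open>s \<le> k\<close>, of "snd p"] \<open>k \<le> len p\<close> \<open>s \<le> k\<close>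
    by (simp add: t_def cat_def subpath_def prod_eq_iff len_def)
  ultimately have "factor_between (snd ` R) (snd p) (s + t) k"
    using inI_iff_has_factor[OF ma] b(1) \<open>inI Q R r\<close> \<open>k \<le> len p\<close>
    by (simp add: composable_def factor_between_def len_def)
  then show False using later \<open>t \<noteq> 0\<close> by simp
qed

section \<open>Greedy chains of cut points\<close>

text \<open>The cut points c = e 0 < e 1 < ... < e N of a left (N - 1)-ambiguity occurring in the
  word x at position c, with relations S: e (i + 2) is the first position at which a relation
  starting at or after e i is completed.\<close>
definition amb_chain :: "'a list set \<Rightarrow> 'a list \<Rightarrow> nat \<Rightarrow> nat \<Rightarrow> (nat \<Rightarrow> nat) \<Rightarrow> bool" where
  "amb_chain S x c N e \<longleftrightarrow> e 0 = c \<and> e 1 = Suc c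
     \<and> (\<forall>i. i + 2 \<le> N \<longrightarrow> factor_between S x (e i) (e (i + 2))
                           \<and> (\<forall>k < e (i + 2). \<not> factor_between S x (e i) k))
     \<and> (\<forall>i < N. e i < e (Suc i) \<and> \<not> factor_between S x (e i) (e (Suc i)))"

lemma amb_chain_mono:
  assumes "amb_chain S x c N e" and "i \<le> j" and "j \<le> N"
  shows "e i \<le> e j"
  using assms(2,3)
proof (induction j)
  case (Suc j)
  have "e j < e (Suc j)"
    using assms(1) Suc.prems unfolding amb_chain_def by auto
  with Suc show ?case by (cases "i = Suc j") auto
qed simp

lemma amb_chain_unique:
  assumes "amb_chain S x c N e" and "amb_chain S x c N e'" and "i \<le> N"
  shows "e i = e' i"
  using assms(3)
proof (induction i rule: less_induct)
  case (less i)
  show ?case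
  proof (cases "i < 2")
    case True
    then show ?thesis using assms(1,2) unfolding amb_chain_def by (auto simp: less_2_cases_iff)
  next
    case False
    then obtain j where i: "i = j + 2" by (metis add.commute le_Suc_ex not_less)
    then have "e j = e' j" using less by simp
    moreover have "factor_between S x (e j) (e i)" "\<forall>k < e i. \<not> factor_between S x (e j) k"
      and "factor_between S x (e' j) (e' i)" "\<forall>k < e' i. \<not> factor_between S x (e' j) k"
      using assms(1,2) less.prems unfolding amb_chain_def i by blast+
    ultimately show ?thesis by (metis linorder_neqE_nat)
  qed
qed

text \<open>The relation ending at e (j + 2) starts after d i, so by greediness d (i + 2) comes no
  later.\<close>
lemma amb_chain_catch_up:
  assumes e: "amb_chain S x c N e" and d: "amb_chain S x c' N' d"
    and "d i \<le> e j" and "i + 2 * t \<le> N'" and "j + 2 * t \<le> N"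
  shows "d (i + 2 * t) \<le> e (j + 2 * t)"
  using assms(4,5)
proof (induction t)
  case (Suc t)
  then have "d (i + 2 * t) \<le> e (j + 2 * t)" by simp
  moreover have "factor_between S x (e (j + 2 * t)) (e (j + 2 * t + 2))"
    using e Suc.prems unfolding amb_chain_def by simp
  ultimately have "factor_between S x (d (i + 2 * t)) (e (j + 2 * t + 2))"
    using factor_between_mono_start by blast
  moreover have "\<forall>k < d (i + 2 * t + 2). \<not> factor_between S x (d (i + 2 * t)) k"
    using d Suc.prems unfolding amb_chain_def by simp
  ultimately show ?case by (simp add: not_less[symmetric] algebra_simps) blast
qed (use assms(3) in simp)

text \<open>The oddness of M is where the parity hypothesis of the theorem enters.\<close>
lemma amb_chain_interleave:
  assumes e: "amb_chain S x 0 N e" and d: "amb_chain S x c M d"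
    and "M = 2 * t + 1" and "M + 1 \<le> N"
  shows "e 2 \<le> c \<longleftrightarrow> e (M + 1) < d M"
proof
  assume "e 2 \<le> c"
  then have "e (2 + 2 * t) \<le> d (0 + 2 * t)"
    using amb_chain_catch_up[OF d e, of 2 0 t] d assms(3,4) by (simp add: amb_chain_def)
  moreover have "d (2 * t) < d (Suc (2 * t))"
    using d assms(3) unfolding amb_chain_def by simp
  ultimately show "e (M + 1) < d M" using assms(3) by simp
next
  assume "e (M + 1) < d M"
  show "e 2 \<le> c"
  proof (rule ccontr)
    assume "\<not> e 2 \<le> c"
    then have "d (1 + 2 * t) \<le> e (2 + 2 * t)"
      using amb_chain_catch_up[OF e d, of 1 2 t] d e assms(3,4) by (simp add: amb_chain_def)
    then show False using \<open>e (M + 1) < d M\<close> assms(3) by simp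
  qed
qed

lemma amb_chain_first_relation:
  assumes "amb_chain S x 0 N e" and "2 \<le> N" and "c \<le> length x"
  shows "factor_between S x 0 c \<longleftrightarrow> e 2 \<le> c"
proof -
  have "factor_between S x 0 (e 2)" and "\<forall>k < e 2. \<not> factor_between S x 0 k"
    using assms(1,2) unfolding amb_chain_def by (metis add_0)+
  then show ?thesis
    using factor_between_mono_end[OF _ assms(3)] not_le by blast
qed

lemma amb_chain_relation_ending_after:
  assumes "amb_chain S x c N e" and "i + 2 \<le> N" and "e (i + 2) \<le> t" and "t \<le> length x"
  shows "factor_between S x (e i) t"
  using assms factor_between_mono_end unfolding amb_chain_def by blast

lemma amb_chain_relation_end:
  assumes e: "amb_chain S x c N e" and "e N \<le> length x" and "i < N"
    and relation: "factor_between S x (e i) t"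
  shows "e (Suc i) < t" and "i + 2 \<le> N \<Longrightarrow> e (i + 2) \<le> t"
proof -
  have "e (Suc i) \<le> length x"
    using amb_chain_mono[OF e, of "Suc i" N] \<open>e N \<le> length x\<close> \<open>i < N\<close> by simp
  then show "e (Suc i) < t"
    using e \<open>i < N\<close> factor_between_mono_end[OF _ _ relation] unfolding amb_chain_def
    by (meson not_less)
  show "e (i + 2) \<le> t" if "i + 2 \<le> N"
    using e that relation unfolding amb_chain_def by (meson not_less)
qed

text \<open>Mirror image of an ambiguity chain: the cut points c = g 0 > g 1 > ... > g N of a right
  (N - 1)-ambiguity ending in x at position c.\<close>
definition right_amb_chain :: "'a list set \<Rightarrow> 'a list \<Rightarrow> nat \<Rightarrow> nat \<Rightarrow> (nat \<Rightarrow> nat) \<Rightarrow> bool" where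
  "right_amb_chain S x c N g \<longleftrightarrow> g 0 = c \<and> g 1 = c - 1
     \<and> (\<forall>i. i + 2 \<le> N \<longrightarrow> factor_between S x (g (i + 2)) (g i)
                           \<and> (\<forall>k > g (i + 2). \<not> factor_between S x k (g i)))
     \<and> (\<forall>i < N. g (Suc i) < g i \<and> \<not> factor_between S x (g (Suc i)) (g i))"

lemma right_amb_chain_antimono:
  assumes "right_amb_chain S x c N g" and "i \<le> j" and "j \<le> N"
  shows "g j \<le> g i"
  using assms(2,3)
proof (induction j)
  case (Suc j)
  have "g (Suc j) < g j"
    using assms(1) Suc.prems unfolding right_amb_chain_def by auto
  with Suc show ?case by (cases "i = Suc j") auto
qed simp

fun right_greedy :: "'a list set \<Rightarrow> 'a list \<Rightarrow> nat \<Rightarrow> nat" where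
  "right_greedy S x 0 = length x"
| "right_greedy S x (Suc 0) = length x - 1"
| "right_greedy S x (Suc (Suc j)) = (GREATEST k. factor_between S x k (right_greedy S x j))"

lemma right_greedy_step:
  assumes "factor_between S x k (right_greedy S x j)"
  shows "factor_between S x (right_greedy S x (j + 2)) (right_greedy S x j)"
    and "k \<le> right_greedy S x (j + 2)"
    and "\<forall>k' > right_greedy S x (j + 2). \<not> factor_between S x k' (right_greedy S x j)"
proof -
  have bound: "\<And>k'. factor_between S x k' (right_greedy S x j) \<Longrightarrow> k' \<le> right_greedy S x j"
    by (simp add: factor_between_def)
  show "factor_between S x (right_greedy S x (j + 2)) (right_greedy S x j)"
    using GreatestI_nat[of "\<lambda>k. factor_between S x k (right_greedy S x j)", OF assms bound] by simp
  show "k \<le> right_greedy S x (j + 2)"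
    using Greatest_le_nat[of "\<lambda>k. factor_between S x k (right_greedy S x j)", OF assms bound]
    by simp
  show "\<forall>k' > right_greedy S x (j + 2). \<not> factor_between S x k' (right_greedy S x j)"
    using Greatest_le_nat[of "\<lambda>k. factor_between S x k (right_greedy S x j)", OF _ bound]
    by (auto simp: not_le[symmetric])
qed

text \<open>Interleaving of the greedy right chain with a left chain: the left relation ending at
  e (N - j) starts at e (N - j - 2), which bounds the greedy choice after right_greedy S x j from below, and
  the minimality of the left relations bounds it from above.\<close>
lemma right_greedy_interleave:
  assumes e: "amb_chain S x 0 N e" and eN: "e N = length x"
    and "J \<le> N"
  shows "right_greedy S x J \<le> length x \<and> e (N - J) \<le> right_greedy S x J
     \<and> (1 \<le> J \<longrightarrow> right_greedy S x J < e (N + 1 - J))"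
  using \<open>J \<le> N\<close>
proof (induction J rule: induct_nat_012)
  case 0
  then show ?case using eN by simp
next
  case 1
  then have "N - 1 < N" by simp
  then have "e (N - 1) < e (Suc (N - 1))"
    using e unfolding amb_chain_def by blast
  then show ?case using eN 1 by simp linarith
next
  case (ge2 j)
  let ?g = "right_greedy S x"
  have IH: "?g j \<le> length x" "e (N - j) \<le> ?g j" "1 \<le> j \<Longrightarrow> ?g j < e (N + 1 - j)"
    using ge2 by simp_all
  have "factor_between S x (e (N - Suc (Suc j))) (?g j)"
    using amb_chain_relation_ending_after[OF e, of "N - Suc (Suc j)"] IH(1,2) ge2.prems
    by (simp add: Suc_diff_Suc numeral_2_eq_2)
  from right_greedy_step[OF this]
  have new: "factor_between S x (?g (Suc (Suc j))) (?g j)"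
    and low: "e (N - Suc (Suc j)) \<le> ?g (Suc (Suc j))"
    by (simp_all add: numeral_2_eq_2)
  have up: "?g (Suc (Suc j)) < e (N - Suc j)"
  proof (rule ccontr)
    assume "\<not> ?thesis"
    then have "factor_between S x (e (N - Suc j)) (?g j)"
      using new factor_between_mono_start not_less by blast
    note relation_end = amb_chain_relation_end[OF e _ _ this, unfolded eN]
    show False
    proof (cases j)
      case 0
      then show False using relation_end(1) ge2.prems eN by (simp add: Suc_diff_Suc)
    next
      case (Suc j')
      then have "e (N + 1 - j) \<le> ?g j"
        using relation_end(2) ge2.prems by (simp add: Suc_diff_Suc)
      then show False using IH(3) Suc by simp
    qed
  qed
  have "?g (Suc (Suc j)) \<le> ?g j" using new unfolding factor_between_def by (rule conjunct1)
  then show ?case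
    using low up IH(1) by (simp add: Suc_diff_Suc)
qed

lemma right_greedy_amb_chain:
  assumes S: "\<forall>r\<in>S. 2 \<le> length r" and e: "amb_chain S x 0 N e" and eN: "e N = length x"
    and "1 \<le> N"
  shows "right_amb_chain S x (length x) N (right_greedy S x)" and "right_greedy S x N = 0"
proof -
  let ?g = "right_greedy S x"
  note interleave = right_greedy_interleave[OF e eN]
  have relation: "factor_between S x (?g (i + 2)) (?g i)"
    and maximal: "\<forall>k > ?g (i + 2). \<not> factor_between S x k (?g i)" if "i + 2 \<le> N" for i
  proof -
    have "factor_between S x (e (N - (i + 2))) (?g i)"
      using amb_chain_relation_ending_after[OF e, of "N - (i + 2)"] interleave[of i] that
      by (simp add: Suc_diff_Suc)
    from right_greedy_step[OF this]
    show "factor_between S x (?g (i + 2)) (?g i)" "\<forall>k > ?g (i + 2). \<not> factor_between S x k (?g i)"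
      by simp_all
  qed
  have piece: "?g (Suc i) < ?g i \<and> \<not> factor_between S x (?g (Suc i)) (?g i)" if "i < N" for i
  proof
    have low: "e (N - Suc i) \<le> ?g (Suc i)" and up: "?g (Suc i) < e (N - i)" and "e (N - i) \<le> ?g i"
      using interleave[of i] interleave[of "Suc i"] that by simp_all
    then show "?g (Suc i) < ?g i" by simp
    show "\<not> factor_between S x (?g (Suc i)) (?g i)"
    proof
      assume relation: "factor_between S x (?g (Suc i)) (?g i)"
      show False
      proof (cases i)
        case 0
        then show False using factor_between_length[OF S relation] by simp
      next
        case (Suc i')
        have "e (N - Suc i + 2) \<le> ?g i"
          using amb_chain_relation_end(2)[OF e _ _ factor_between_mono_start[OF low relation]] eN that Suc
          by simp
        then show False
          using interleave[of i] that Suc by (simp add: Suc_diff_Suc)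
      qed
    qed
  qed
  show "right_amb_chain S x (length x) N ?g"
    unfolding right_amb_chain_def using relation maximal piece by simp
  show "?g N = 0"
    using interleave[of N] e \<open>1 \<le> N\<close> unfolding amb_chain_def by simp
qed

section \<open>Ambiguities as greedy chains\<close>

text \<open>The arrow words of the pieces u_{-1}, u_0, ..., u_n of a left n-ambiguity, in written
  order, for the relation words S.\<close>
definition left_chain :: "'a list set \<Rightarrow> 'a list list \<Rightarrow> bool" where
  "left_chain S ls \<longleftrightarrow> 2 \<le> length ls \<and> ls ! 0 = [] \<and> length (ls ! 1) = 1
     \<and> (\<forall>i < length ls. \<not> has_factor S (ls ! i))
     \<and> (\<forall>i. i + 2 < length ls \<longrightarrow> has_factor S (ls ! Suc i @ ls ! Suc (Suc i))
          \<and> (\<forall>j < length (ls ! Suc i @ ls ! Suc (Suc i)).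
               \<not> has_factor S (take j (ls ! Suc i @ ls ! Suc (Suc i)))))"

definition cut_point :: "'a list list \<Rightarrow> nat \<Rightarrow> nat" where
  "cut_point ls i = length (concat (take (Suc i) ls))"

lemma cut_point_Suc: "Suc i < length ls \<Longrightarrow> cut_point ls (Suc i) = cut_point ls i + length (ls ! Suc i)"
  by (simp add: cut_point_def take_Suc_conv_app_nth)

lemma cut_point_last: "ls \<noteq> [] \<Longrightarrow> cut_point ls (length ls - 1) = length (concat ls)"
  by (simp add: cut_point_def)

lemma cut_point_le_length: "i < length ls \<Longrightarrow> cut_point ls i \<le> length (concat ls)"
  by (metis append_take_drop_id concat_append cut_point_def le_add1 length_append)

lemma drop_cut_point:
  "drop (length pre + cut_point ls i) (pre @ concat ls @ post) = concat (drop (Suc i) ls) @ post"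
proof -
  have "concat ls = concat (take (Suc i) ls) @ concat (drop (Suc i) ls)"
    by (metis append_take_drop_id concat_append)
  then show ?thesis unfolding cut_point_def by simp
qed

lemma slice_cut_point_Suc:
  assumes "Suc i < length ls"
  shows "slice (pre @ concat ls @ post) (length pre + cut_point ls i) (length pre + cut_point ls (Suc i))
    = ls ! Suc i"
  using drop_cut_point[of pre ls i post] assms cut_point_Suc[OF assms]
  by (simp add: slice_def Cons_nth_drop_Suc[symmetric])

lemma slice_cut_point_take:
  assumes "i + 2 < length ls" and "k \<le> length pre + cut_point ls (i + 2)"
  shows "slice (pre @ concat ls @ post) (length pre + cut_point ls i) k
    = take (k - (length pre + cut_point ls i)) (ls ! Suc i @ ls ! Suc (Suc i))"
  using drop_cut_point[of pre ls i post] assms cut_point_Suc[of i ls] cut_point_Suc[of "Suc i" ls]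
  by (simp add: slice_def Cons_nth_drop_Suc[symmetric] numeral_2_eq_2)

lemma left_chain_nonempty:
  assumes "left_chain S ls" and "1 \<le> i" and "i < length ls"
  shows "ls ! i \<noteq> []"
proof (cases "i = 1")
  case True
  then show ?thesis using assms(1) unfolding left_chain_def by auto
next
  case False
  then obtain j where i: "i = Suc (Suc j)" using assms(2) by (metis One_nat_def Suc_le_D le_SucE)
  then have "has_factor S (ls ! Suc j @ ls ! i)" and "\<not> has_factor S (ls ! Suc j)"
    using assms(1,3) unfolding left_chain_def by auto
  then show ?thesis by auto
qed

lemma left_chain_amb_chain:
  assumes l: "left_chain S ls" and x: "x = pre @ concat ls @ post"
  shows "amb_chain S x (length pre) (length ls - 1) (\<lambda>i. length pre + cut_point ls i)"
proof -
  define e where "e i = length pre + cut_point ls i" for i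
  have len: "2 \<le> length ls" and l0: "ls ! 0 = []" and l1: "length (ls ! 1) = 1"
    and free: "\<And>i. i < length ls \<Longrightarrow> \<not> has_factor S (ls ! i)"
    and rel: "\<And>i. i + 2 < length ls \<Longrightarrow> has_factor S (ls ! Suc i @ ls ! Suc (Suc i))"
    and minimal: "\<And>i j. i + 2 < length ls \<Longrightarrow> j < length (ls ! Suc i @ ls ! Suc (Suc i)) \<Longrightarrow>
        \<not> has_factor S (take j (ls ! Suc i @ ls ! Suc (Suc i)))"
    using l unfolding left_chain_def by auto
  have e_Suc: "e (Suc i) = e i + length (ls ! Suc i)" if "Suc i < length ls" for i
    using cut_point_Suc[OF that] by (simp add: e_def)
  have "take 1 ls = [ls ! 0]" using len by (cases ls) auto
  then have e01: "e 0 = length pre" "e 1 = Suc (length pre)"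
    using len l0 l1 e_Suc[of 0] by (simp_all add: e_def cut_point_def)
  have "factor_between S x (e i) (e (i + 2)) \<and> (\<forall>k < e (i + 2). \<not> factor_between S x (e i) k)"
    if "i + 2 \<le> length ls - 1" for i
  proof -
    have i: "i + 2 < length ls" using that by simp
    note two = slice_cut_point_take[OF i, of _ pre post, folded e_def x]
    have span: "e (i + 2) = e i + length (ls ! Suc i @ ls ! Suc (Suc i))"
      using e_Suc[of i] e_Suc[of "Suc i"] i by (simp add: numeral_2_eq_2)
    have "\<not> factor_between S x (e i) k" if "k < e (i + 2)" for k
    proof
      assume relation: "factor_between S x (e i) k"
      then have "has_factor S (take (k - e i) (ls ! Suc i @ ls ! Suc (Suc i)))"
        using two \<open>k < e (i + 2)\<close> by (simp add: factor_between_def)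
      moreover have "k - e i < length (ls ! Suc i @ ls ! Suc (Suc i))"
        using \<open>k < e (i + 2)\<close> span relation unfolding factor_between_def by linarith
      ultimately show False using minimal[OF i] by blast
    qed
    moreover have "e (i + 2) \<le> length x"
      using cut_point_le_length[of "i + 2" ls] i x by (simp add: e_def)
    then have "factor_between S x (e i) (e (i + 2))"
      unfolding factor_between_def using two rel[OF i] span by simp
    ultimately show ?thesis by blast
  qed
  moreover have "e i < e (Suc i) \<and> \<not> factor_between S x (e i) (e (Suc i))" if "i < length ls - 1" for i
    using e_Suc[of i] left_chain_nonempty[OF l, of "Suc i"] free[of "Suc i"] that
      slice_cut_point_Suc[of i ls pre post, folded e_def x]
    by (simp add: factor_between_def)
  ultimately show ?thesis
    unfolding amb_chain_def e_def[symmetric] using e01 by simp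
qed

lemma cut_points_eq_imp_eq:
  "length ls = length ls' \<Longrightarrow> concat ls = concat ls' \<Longrightarrow>
     (\<forall>i < length ls. cut_point ls i = cut_point ls' i) \<Longrightarrow> ls = ls'"
proof (induction ls arbitrary: ls')
  case (Cons u ls)
  obtain u' ls'' where ls': "ls' = u' # ls''" using Cons.prems(1) by (cases ls') auto
  have "cut_point (u # ls) 0 = cut_point ls' 0" using Cons.prems(3) by simp
  then have "length u = length u'" by (simp add: ls' cut_point_def)
  moreover have "u @ concat ls = u' @ concat ls''" using Cons.prems(2) ls' by simp
  ultimately have "u = u'" and "concat ls = concat ls''" by auto
  moreover have "\<forall>i < length ls. cut_point ls i = cut_point ls'' i"
  proof (intro allI impI)
    fix i assume "i < length ls"
    then have "cut_point (u # ls) (Suc i) = cut_point ls' (Suc i)" using Cons.prems(3) by simp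
    then show "cut_point ls i = cut_point ls'' i" by (simp add: ls' cut_point_def \<open>u = u'\<close>)
  qed
  ultimately show ?case using Cons.IH[of ls''] Cons.prems(1) ls' by simp
qed simp

lemma left_chain_unique:
  assumes "left_chain S ls" and "left_chain S ls'"
    and "concat ls = concat ls'" and "length ls = length ls'"
  shows "ls = ls'"
proof -
  have "amb_chain S (concat ls) 0 (length ls - 1) (cut_point ls)"
    and "amb_chain S (concat ls) 0 (length ls - 1) (cut_point ls')"
    using left_chain_amb_chain[OF assms(1), of _ "[]" "[]"] left_chain_amb_chain[OF assms(2), of _ "[]" "[]"]
      assms(3,4) by simp_all
  then have "\<forall>i < length ls. cut_point ls i = cut_point ls' i"
    using amb_chain_unique by (metis Suc_pred' less_Suc_eq_le not_less_zero gr0I)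
  then show ?thesis using cut_points_eq_imp_eq assms(3,4) by blast
qed

text \<open>Here ls and lq are the words of an n-ambiguity at position 0 and of an m-ambiguity at
  position length pre of x, so length ls = n + 2 and length lq = m + 2.\<close>
lemma left_chain_occurrence:
  assumes p: "left_chain S ls" and q: "left_chain S lq"
    and x: "x = concat ls @ post" "x = pre @ concat lq @ post'"
    and "even (length lq)" and "length lq < length ls"
  shows "\<not> has_factor S pre \<longleftrightarrow> length pre + length (concat lq) \<le> cut_point ls (length lq)"
    and "cut_point ls (length lq) \<le> length (concat ls)"
proof -
  define N where "N = length ls - 1"
  define M where "M = length lq - 1"
  have e: "amb_chain S x 0 N (cut_point ls)"
    using left_chain_amb_chain[OF p, of x "[]"] x(1) by (simp add: N_def)
  have d: "amb_chain S x (length pre) M (\<lambda>i. length pre + cut_point lq i)"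
    using left_chain_amb_chain[OF q x(2)] by (simp add: M_def)
  obtain s where s: "length lq = 2 * s" using \<open>even (length lq)\<close> by (rule evenE)
  moreover have "2 \<le> length lq" using q unfolding left_chain_def by simp
  ultimately have t: "M = 2 * (s - 1) + 1" unfolding M_def by simp
  have M: "M + 1 = length lq" and "M + 1 \<le> N"
    using q \<open>length lq < length ls\<close> unfolding M_def N_def left_chain_def by auto
  have "has_factor S pre \<longleftrightarrow> factor_between S x 0 (length pre)"
    using x(2) by (simp add: factor_between_def slice_def)
  also have "\<dots> \<longleftrightarrow> cut_point ls 2 \<le> length pre"
    using amb_chain_first_relation[OF e] t \<open>M + 1 \<le> N\<close> x(2) by simp
  also have "\<dots> \<longleftrightarrow> cut_point ls (M + 1) < length pre + cut_point lq M"
    using amb_chain_interleave[OF e d t \<open>M + 1 \<le> N\<close>] .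
  moreover have "cut_point lq M = length (concat lq)"
    using cut_point_last[of lq] \<open>2 \<le> length lq\<close> unfolding M_def by (cases lq) auto
  ultimately show "\<not> has_factor S pre \<longleftrightarrow> length pre + length (concat lq) \<le> cut_point ls (length lq)"
    using M by auto
  have "cut_point ls N = length (concat ls)"
    using cut_point_last[of ls] \<open>M + 1 \<le> N\<close> unfolding N_def by (cases ls) auto
  then show "cut_point ls (length lq) \<le> length (concat ls)"
    using amb_chain_mono[OF e, of "length lq" N] M \<open>M + 1 \<le> N\<close> by simp
qed

lemma Bpaths_not_has_factor:
  "monomial_algebra Q R \<Longrightarrow> u \<in> Bpaths Q R \<Longrightarrow> \<not> has_factor (snd ` R) (snd u)"
  unfolding Bpaths_def using inI_iff_has_factor by blast

lemma left_decomp_left_chain: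
  assumes ma: "monomial_algebra Q R" and d: "left_decomp Q R n w us" and "0 \<le> n"
  shows "left_chain (snd ` R) (map snd us)"
proof -
  note tgt = monomial_algebra_tgt[OF ma]
  have len: "2 \<le> length us" and "len (us ! 0) = 0" and "len (us ! 1) = 1"
    and "\<forall>j < length us. us ! j \<in> Bpaths Q R"
    using d \<open>0 \<le> n\<close> unfolding left_decomp_def by auto
  moreover have "has_factor (snd ` R) (snd (us ! Suc i) @ snd (us ! Suc (Suc i)))
      \<and> (\<forall>j < length (snd (us ! Suc i) @ snd (us ! Suc (Suc i))).
           \<not> has_factor (snd ` R) (take j (snd (us ! Suc i) @ snd (us ! Suc (Suc i)))))"
    if i: "i + 2 < length us" for i
  proof -
    define c where "c = cat (us ! Suc i) (us ! Suc (Suc i))"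
    have snd_c: "snd c = snd (us ! Suc i) @ snd (us ! Suc (Suc i))"
      by (simp add: c_def cat_def)
    have "valid Q c"
      using d i valid_cat[OF tgt] unfolding c_def left_decomp_def by simp
    moreover have "inI Q R c" and minimal: "\<And>r. is_suffix Q r c \<Longrightarrow> r \<noteq> c \<Longrightarrow> \<not> inI Q R r"
      using d i unfolding c_def left_decomp_def by blast+
    moreover have "\<not> has_factor (snd ` R) (take j (snd c))" if "j < len c" for j
    proof -
      define r where "r = subpath Q c 0 j"
      have "r \<noteq> c" and "valid Q r"
        using len_subpath[of 0 j c Q] that subpath_valid[OF tgt \<open>valid Q c\<close>] by (auto simp: r_def)
      then have "\<not> inI Q R r"
        using minimal is_suffix_subpath[OF tgt \<open>valid Q c\<close>] that by (simp add: r_def)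
      then show ?thesis
        using inI_iff_has_factor[OF ma \<open>valid Q r\<close>] by (simp add: r_def subpath_def slice_def)
    qed
    ultimately show ?thesis
      using inI_iff_has_factor[OF ma] snd_c by (auto simp: len_def)
  qed
  moreover have "0 < length us" "Suc 0 < length us" using len by linarith+
  ultimately show ?thesis
    unfolding left_chain_def using Bpaths_not_has_factor[OF ma] by (simp add: len_def)
qed

lemma right_decomp_left_chain:
  assumes ma: "monomial_algebra Q R" and d: "right_decomp Q R n w vs" and "0 \<le> n"
  shows "left_chain (rev ` snd ` R) (map (rev \<circ> snd) vs)"
proof -
  note tgt = monomial_algebra_tgt[OF ma]
  have len: "2 \<le> length vs" and "len (vs ! 0) = 0" and "len (vs ! 1) = 1"
    and "\<forall>j < length vs. vs ! j \<in> Bpaths Q R"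
    using d \<open>0 \<le> n\<close> unfolding right_decomp_def by auto
  moreover have "has_factor (rev ` snd ` R) (rev (snd (vs ! Suc i)) @ rev (snd (vs ! Suc (Suc i))))
      \<and> (\<forall>j < length (rev (snd (vs ! Suc i)) @ rev (snd (vs ! Suc (Suc i)))).
           \<not> has_factor (rev ` snd ` R) (take j (rev (snd (vs ! Suc i)) @ rev (snd (vs ! Suc (Suc i))))))"
    if i: "i + 2 < length vs" for i
  proof -
    define c where "c = cat (vs ! Suc (Suc i)) (vs ! Suc i)"
    have snd_c: "rev (snd (vs ! Suc i)) @ rev (snd (vs ! Suc (Suc i))) = rev (snd c)"
      by (simp add: c_def cat_def)
    have "valid Q c"
      using d i valid_cat[OF tgt] unfolding c_def right_decomp_def by simp
    moreover have "inI Q R c" and minimal: "\<And>r. is_prefix Q r c \<Longrightarrow> r \<noteq> c \<Longrightarrow> \<not> inI Q R r"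
      using d i unfolding c_def right_decomp_def by blast+
    moreover have "\<not> has_factor (rev ` snd ` R) (take j (rev (snd c)))" if "j < len c" for j
    proof -
      define r where "r = subpath Q c (len c - j) (len c)"
      have "r \<noteq> c" and "valid Q r"
        using len_subpath[of "len c - j" "len c" c Q] that subpath_valid[OF tgt \<open>valid Q c\<close>]
        by (auto simp: r_def)
      then have "\<not> inI Q R r"
        using minimal is_prefix_subpath[OF tgt \<open>valid Q c\<close>] by (simp add: r_def)
      moreover have "take j (rev (snd c)) = rev (snd r)"
        using that by (simp add: r_def subpath_def slice_def rev_drop len_def)
      ultimately show ?thesis
        using inI_iff_has_factor[OF ma \<open>valid Q r\<close>] has_factor_rev[of "snd ` R" "snd r"] by simp
    qed
    ultimately show ?thesis
      using inI_iff_has_factor[OF ma] snd_c has_factor_rev[of "snd ` R" "snd c"] by (auto simp: len_def)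
  qed
  moreover have "\<forall>i < length vs. \<not> has_factor (rev ` snd ` R) (rev (snd (vs ! i)))"
    using \<open>\<forall>j < length vs. vs ! j \<in> Bpaths Q R\<close> Bpaths_not_has_factor[OF ma] unfolding has_factor_rev by blast
  moreover have "0 < length vs" "Suc 0 < length vs" using len by linarith+
  ultimately show ?thesis
    unfolding left_chain_def by (simp add: len_def)
qed

lemma valid_path_eqI: "valid Q u \<Longrightarrow> valid Q u' \<Longrightarrow> snd u = snd u' \<Longrightarrow> snd u \<noteq> [] \<Longrightarrow> u = u'"
  by (simp add: valid_def prod_eq_iff)

lemma left_decomp_unique:
  assumes ma: "monomial_algebra Q R" and d: "left_decomp Q R n w us" and d': "left_decomp Q R n w us'"
    and "0 \<le> n"
  shows "us = us'"
proof -
  have chain: "left_chain (snd ` R) (map snd us)"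
    using left_decomp_left_chain[OF ma d \<open>0 \<le> n\<close>] .
  have "map snd us = map snd us'"
    using left_chain_unique[OF chain left_decomp_left_chain[OF ma d' \<open>0 \<le> n\<close>]] d d'
    unfolding left_decomp_def by simp
  then have same_length: "length us = length us'"
    and same_word: "\<And>j. j < length us \<Longrightarrow> snd (us ! j) = snd (us' ! j)"
    by (metis length_map, metis nth_map length_map)
  have valid: "valid Q (us ! j)" "valid Q (us' ! j)" if "j < length us" for j
    using d d' that same_length unfolding left_decomp_def Bpaths_def by auto
  have pieces: "us ! j = us' ! j" if "1 \<le> j" "j < length us" for j
    using valid_path_eqI[OF valid[OF that(2)] same_word[OF that(2)]]
      left_chain_nonempty[OF chain, of j] that by simp
  have "1 < length us" using chain by (simp add: left_chain_def)
  then have "composable Q (us ! 0) (us ! 1)" "composable Q (us' ! 0) (us' ! 1)"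
    using d d' same_length unfolding left_decomp_def by auto
  then have "fst (us ! 0) = fst (us' ! 0)"
    using pieces[of 1] \<open>1 < length us\<close> unfolding composable_def psrc_def by simp
  moreover have "snd (us ! 0) = snd (us' ! 0)"
    using same_word[of 0] \<open>1 < length us\<close> by linarith
  ultimately have "us ! 0 = us' ! 0" by (simp add: prod_eq_iff)
  then show ?thesis
    using pieces same_length by (metis less_one not_less nth_equalityI)
qed

lemma right_decomp_unique:
  assumes ma: "monomial_algebra Q R" and d: "right_decomp Q R n w vs" and d': "right_decomp Q R n w vs'"
    and "0 \<le> n"
  shows "vs = vs'"
proof -
  have chain: "left_chain (rev ` snd ` R) (map (rev \<circ> snd) vs)"
    using right_decomp_left_chain[OF ma d \<open>0 \<le> n\<close>] .
  have "concat (map (rev \<circ> snd) us) = rev (snd w)" if "right_decomp Q R n w us" for us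
    using that unfolding right_decomp_def by (simp add: rev_concat rev_map)
  then have "map (rev \<circ> snd) vs = map (rev \<circ> snd) vs'"
    using left_chain_unique[OF chain right_decomp_left_chain[OF ma d' \<open>0 \<le> n\<close>]] d d'
    unfolding right_decomp_def by simp
  then have same_length: "length vs = length vs'"
    and same_word: "\<And>j. j < length vs \<Longrightarrow> snd (vs ! j) = snd (vs' ! j)"
    by (metis length_map, metis comp_apply nth_map length_map rev_rev_ident)
  have valid: "valid Q (vs ! j)" "valid Q (vs' ! j)" if "j < length vs" for j
    using d d' that same_length unfolding right_decomp_def Bpaths_def by auto
  have pieces: "vs ! j = vs' ! j" if "1 \<le> j" "j < length vs" for j
    using valid_path_eqI[OF valid[OF that(2)] same_word[OF that(2)]]
      left_chain_nonempty[OF chain, of j] that by simp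
  have "1 < length vs" using chain by (simp add: left_chain_def)
  then have "snd (vs ! 0) = snd (vs' ! 0)"
    using same_word[of 0] by linarith
  then have "vs ! 0 = vs' ! 0"
    using d d' unfolding right_decomp_def psrc_def by (simp add: prod_eq_iff)
  then show ?thesis
    using pieces same_length by (metis less_one not_less nth_equalityI)
qed

lemma len_sigma:
  assumes ma: "monomial_algebra Q R" and d: "left_decomp Q R n p us" and "0 \<le> n" and "-1 \<le> k"
  shows "len (sigma Q R n k p) = cut_point (map snd us) (nat (k + 1))"
proof -
  have "(THE us. left_decomp Q R n p us) = us"
    using left_decomp_unique[OF ma _ d \<open>0 \<le> n\<close>] d by blast
  moreover have "nat (k + 2) = Suc (nat (k + 1))" using \<open>-1 \<le> k\<close> by simp
  ultimately show ?thesis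
    by (simp add: sigma_def Let_def len_def cut_point_def take_map)
qed

lemma len_pi_amb:
  assumes ma: "monomial_algebra Q R" and d: "right_decomp Q R n p vs" and "0 \<le> n" and "-1 \<le> k"
  shows "len (pi_amb Q R n k p) = cut_point (map (rev \<circ> snd) vs) (nat (k + 1))"
proof -
  have "(THE vs. right_decomp Q R n p vs) = vs"
    using right_decomp_unique[OF ma _ d \<open>0 \<le> n\<close>] d by blast
  moreover have "nat (k + 2) = Suc (nat (k + 1))" using \<open>-1 \<le> k\<close> by simp
  ultimately show ?thesis
    by (simp add: pi_amb_def Let_def len_def cut_point_def take_map length_concat rev_map[symmetric] o_def)
qed

lemma right_amb_chain_piece_in_Bpaths:
  assumes ma: "monomial_algebra Q R" and "valid Q p"
    and g: "right_amb_chain (snd ` R) (snd p) (len p) N g" and "j \<le> N"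
  shows "subpath Q p (g j) (g (j - 1)) \<in> Bpaths Q R"
proof -
  have bounds: "g j \<le> g (j - 1)" "g (j - 1) \<le> len p"
    using right_amb_chain_antimono[OF g, of "j - 1" j] right_amb_chain_antimono[OF g, of 0 "j - 1"]
      g \<open>j \<le> N\<close> unfolding right_amb_chain_def by simp_all
  have "\<not> factor_between (snd ` R) (snd p) (g j) (g (j - 1))"
  proof (cases j)
    case 0
    then show ?thesis
      using factor_between_length[OF monomial_algebra_relation_length[OF ma]] by fastforce
  next
    case (Suc i)
    then show ?thesis using g \<open>j \<le> N\<close> unfolding right_amb_chain_def by simp
  qed
  then show ?thesis
    using inI_subpath_iff[OF ma \<open>valid Q p\<close> bounds]
      subpath_valid[OF monomial_algebra_tgt[OF ma] \<open>valid Q p\<close> bounds(1)]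
    by (simp add: Bpaths_def)
qed

lemma right_amb_chain_pair_minimal_relation:
  assumes ma: "monomial_algebra Q R" and "valid Q p"
    and g: "right_amb_chain (snd ` R) (snd p) (len p) N g" and i: "i + 2 \<le> N"
  shows "inI Q R (subpath Q p (g (i + 2)) (g i))"
    and "is_prefix Q r (subpath Q p (g (i + 2)) (g i)) \<Longrightarrow> r \<noteq> subpath Q p (g (i + 2)) (g i)
           \<Longrightarrow> \<not> inI Q R r"
proof -
  have bounds: "g (i + 2) \<le> g i" "g i \<le> len p"
    using right_amb_chain_antimono[OF g, of i "i + 2"] right_amb_chain_antimono[OF g, of 0 i] g i
    unfolding right_amb_chain_def by simp_all
  show "inI Q R (subpath Q p (g (i + 2)) (g i))"
    using inI_subpath_iff[OF ma \<open>valid Q p\<close> bounds] g i unfolding right_amb_chain_def by simp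
  show "\<not> inI Q R r" if "is_prefix Q r (subpath Q p (g (i + 2)) (g i))" "r \<noteq> subpath Q p (g (i + 2)) (g i)"
    using proper_prefix_of_subpath_notin_I[OF ma \<open>valid Q p\<close> bounds _ that] g i
    unfolding right_amb_chain_def by simp
qed

lemma right_amb_chain_right_decomp:
  assumes ma: "monomial_algebra Q R" and "valid Q p" and "0 \<le> n"
    and g: "right_amb_chain (snd ` R) (snd p) (len p) (nat n + 1) g" and "g (nat n + 1) = 0"
  shows "right_decomp Q R n p (map (\<lambda>j. subpath Q p (g j) (g (j - 1))) [0..<nat n + 2])"
    (is "right_decomp Q R n p ?vs")
proof -
  define N where "N = nat n + 1"
  define vs where "vs = ?vs"
  have g0: "g 0 = len p" and g1: "g 1 = len p - 1" and "g 1 < g 0"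
    using g unfolding right_amb_chain_def N_def by auto
  have antimono: "\<And>i j. i \<le> j \<Longrightarrow> j \<le> N \<Longrightarrow> g j \<le> g i"
    using right_amb_chain_antimono[OF g] by (simp add: N_def)
  have length_vs: "length vs = Suc N" by (simp add: vs_def N_def)
  have vs: "vs ! j = subpath Q p (g j) (g (j - 1))" if "j < Suc N" for j
    using that by (simp add: vs_def N_def del: upt_Suc)
  have "concat (map snd (rev vs)) = slice (snd p) (g N) (g 0)"
    using concat_slices_telescope[of N g "snd p", OF antimono]
    by (simp add: vs_def rev_map subpath_def N_def o_def del: upt_Suc)
  then have "snd p = concat (map snd (rev vs))"
    using g0 \<open>g (nat n + 1) = 0\<close> by (simp add: N_def slice_def len_def)
  moreover have "psrc p = psrc (vs ! 0)"
    using vs[of 0] g0 by (simp add: subpath_def psrc_def ptgt_def len_def)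
  moreover have "composable Q (vs ! Suc j) (vs ! j)" if "Suc j < length vs" for j
    using subpath_cat(1)[OF monomial_algebra_tgt[OF ma] \<open>valid Q p\<close>, of "g (Suc j)" "g j" "g (j - 1)"]
      antimono[of j "Suc j"] antimono[of "j - 1" j] vs[of j] vs[of "Suc j"] that length_vs by simp
  moreover have "cat (vs ! Suc (Suc i)) (vs ! Suc i) = subpath Q p (g (i + 2)) (g i)"
    if "i + 2 < length vs" for i
    using subpath_cat(2)[OF monomial_algebra_tgt[OF ma] \<open>valid Q p\<close>, of "g (i + 2)" "g (Suc i)" "g i"]
      antimono[of i "Suc i"] antimono[of "Suc i" "i + 2"] vs[of "Suc i"] vs[of "Suc (Suc i)"] that length_vs
    by (simp add: numeral_2_eq_2)
  moreover have "len (vs ! 0) = 0" and "len (vs ! 1) = 1"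
    using vs[of 0] vs[of 1] len_subpath[of _ _ p Q] g0 g1 \<open>g 1 < g 0\<close> by (simp_all add: N_def)
  ultimately show ?thesis
    unfolding right_decomp_def vs_def[symmetric]
    using \<open>0 \<le> n\<close> \<open>valid Q p\<close> length_vs vs right_amb_chain_piece_in_Bpaths[OF ma \<open>valid Q p\<close> g]
      right_amb_chain_pair_minimal_relation[OF ma \<open>valid Q p\<close> g]
    by (auto simp: N_def nat_add_distrib Suc_le_eq)
qed

lemma left_decomp_imp_right_decomp:
  assumes ma: "monomial_algebra Q R" and d: "left_decomp Q R n p us" and "0 \<le> n"
  shows "\<exists>vs. right_decomp Q R n p vs"
proof -
  define N where "N = nat n + 1"
  have chain: "left_chain (snd ` R) (map snd us)"
    using left_decomp_left_chain[OF ma d \<open>0 \<le> n\<close>] .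
  have word: "snd p = concat (map snd us)" and "length us = Suc N" and "valid Q p"
    using d \<open>0 \<le> n\<close> unfolding left_decomp_def N_def by auto
  then have "amb_chain (snd ` R) (snd p) 0 N (cut_point (map snd us))"
    using left_chain_amb_chain[OF chain, of "snd p" "[]" "[]"] by simp
  moreover have "cut_point (map snd us) N = length (snd p)"
    using cut_point_last[of "map snd us"] word \<open>length us = Suc N\<close> by (cases us) auto
  ultimately have "right_amb_chain (snd ` R) (snd p) (len p) N (right_greedy (snd ` R) (snd p))"
    and "right_greedy (snd ` R) (snd p) N = 0"
    using right_greedy_amb_chain[OF monomial_algebra_relation_length[OF ma]] by (auto simp: N_def len_def)
  then show ?thesis
    using right_amb_chain_right_decomp[OF ma \<open>valid Q p\<close> \<open>0 \<le> n\<close>] unfolding N_def by blast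
qed

section \<open>The occurrence criterion\<close>

lemma outside_I_iff_inside_sigma:
  assumes ma: "monomial_algebra Q R" and "0 \<le> m" and "even m" and "m < n"
    and "p \<in> Gamma Q R n" and "q \<in> Gamma Q R m"
    and "composable Q b (cat q a)" and "cat p ahat = cat b (cat q a)"
  shows "\<not> inI Q R b \<longleftrightarrow> len b + len q \<le> len (sigma Q R n (m + 1) p)"
    and "len (sigma Q R n (m + 1) p) \<le> len p"
proof -
  obtain us uq where dp: "left_decomp Q R n p us" and dq: "left_decomp Q R m q uq"
    using assms(5,6) unfolding Gamma_def by blast
  have "0 \<le> n" using assms(2,4) by simp
  have words: "snd p = concat (map snd us)" "snd q = concat (map snd uq)"
    and lengths: "length uq = nat (m + 2)" "length us = nat (n + 2)"
    using dp dq unfolding left_decomp_def by auto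
  have "even (length (map snd uq))" and "length (map snd uq) < length (map snd us)"
    using lengths \<open>even m\<close> \<open>0 \<le> m\<close> \<open>m < n\<close> by (simp_all add: even_nat_iff)
  note occurrence = left_chain_occurrence[OF left_decomp_left_chain[OF ma dp \<open>0 \<le> n\<close>]
      left_decomp_left_chain[OF ma dq \<open>0 \<le> m\<close>] _ _ this]
  have "len (sigma Q R n (m + 1) p) = cut_point (map snd us) (length (map snd uq))"
    using len_sigma[OF ma dp \<open>0 \<le> n\<close>, of "m + 1"] lengths \<open>0 \<le> m\<close> by (simp add: add.assoc)
  moreover have "inI Q R b \<longleftrightarrow> has_factor (snd ` R) (snd b)"
    using inI_iff_has_factor[OF ma] \<open>composable Q b (cat q a)\<close> by (simp add: composable_def)
  ultimately show "\<not> inI Q R b \<longleftrightarrow> len b + len q \<le> len (sigma Q R n (m + 1) p)"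
    and "len (sigma Q R n (m + 1) p) \<le> len p"
    using occurrence[of "snd p @ snd ahat" "snd ahat" "snd b" "snd a"] assms(8) words
    by (simp_all add: cat_def len_def)
qed

lemma outside_I_iff_inside_pi:
  assumes ma: "monomial_algebra Q R" and "0 \<le> m" and "even m" and "m < n"
    and "p \<in> Gamma Q R n" and "q \<in> Gamma Q R m"
    and "composable Q q a" and "cat bhat p = cat b (cat q a)"
  shows "\<not> inI Q R a \<longleftrightarrow> len a + len q \<le> len (pi_amb Q R n (m + 1) p)"
    and "len (pi_amb Q R n (m + 1) p) \<le> len p"
proof -
  have "0 \<le> n" using assms(2,4) by simp
  obtain vs vq where dp: "right_decomp Q R n p vs" and dq: "right_decomp Q R m q vq"
    using assms(5,6) left_decomp_imp_right_decomp[OF ma] \<open>0 \<le> n\<close> \<open>0 \<le> m\<close>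
    unfolding Gamma_def by blast
  have words: "rev (snd p) = concat (map (rev \<circ> snd) vs)" "rev (snd q) = concat (map (rev \<circ> snd) vq)"
    and lengths: "length vq = nat (m + 2)" "length vs = nat (n + 2)"
    using dp dq unfolding right_decomp_def by (auto simp: rev_concat rev_map)
  have "even (length (map (rev \<circ> snd) vq))" and "length (map (rev \<circ> snd) vq) < length (map (rev \<circ> snd) vs)"
    using lengths \<open>even m\<close> \<open>0 \<le> m\<close> \<open>m < n\<close> by (simp_all add: even_nat_iff)
  note occurrence = left_chain_occurrence[OF right_decomp_left_chain[OF ma dp \<open>0 \<le> n\<close>]
      right_decomp_left_chain[OF ma dq \<open>0 \<le> m\<close>] _ _ this]
  have "len (pi_amb Q R n (m + 1) p) = cut_point (map (rev \<circ> snd) vs) (length (map (rev \<circ> snd) vq))"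
    using len_pi_amb[OF ma dp \<open>0 \<le> n\<close>, of "m + 1"] lengths \<open>0 \<le> m\<close> by (simp add: add.assoc)
  moreover have "inI Q R a \<longleftrightarrow> has_factor (rev ` snd ` R) (rev (snd a))"
    using inI_iff_has_factor[OF ma] \<open>composable Q q a\<close> has_factor_rev[of "snd ` R" "snd a"]
    by (simp add: composable_def)
  moreover have "rev (snd p) @ rev (snd bhat) = rev (snd a) @ rev (snd q) @ rev (snd b)"
    using arg_cong[OF assms(8), of "\<lambda>w. rev (snd w)"] by (simp add: cat_def)
  ultimately show "\<not> inI Q R a \<longleftrightarrow> len a + len q \<le> len (pi_amb Q R n (m + 1) p)"
    and "len (pi_amb Q R n (m + 1) p) \<le> len p"
    using occurrence[of "rev (snd p) @ rev (snd bhat)" "rev (snd bhat)" "rev (snd a)" "rev (snd b)"]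
      words[symmetric] by (simp_all add: len_def)
qed

theorem mainTheorem8:
  fixes Q :: "('v, 'a) quiver" and R :: "('v, 'a) path set" and m n :: int
  assumes "monomial_algebra Q R"
    and "-1 \<le> m" and "even m" and "m < n"
  shows
   "(\<forall>p ahat b q a.
       p \<in> Gamma Q R n \<and> q \<in> Gamma Q R m
       \<and> composable Q p ahat \<and> composable Q q a \<and> composable Q b (cat q a)
       \<and> cat p ahat = cat b (cat q a)
       \<longrightarrow> ((\<not> inI Q R b) \<longleftrightarrow> occ_inside (len b) q 0 (sigma Q R n (m + 1) p))
           \<and> (\<not> inI Q R b \<longrightarrow> occ_inside (len b) q 0 p))
  \<and> (\<forall>p bhat b q a.
       p \<in> Gamma Q R n \<and> q \<in> Gamma Q R m
       \<and> composable Q bhat p \<and> composable Q q a \<and> composable Q b (cat q a)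
       \<and> cat bhat p = cat b (cat q a)
       \<longrightarrow> ((\<not> inI Q R a) \<longleftrightarrow>
              occ_inside (len b) q (len bhat + len p - len (pi_amb Q R n (m + 1) p))
                         (pi_amb Q R n (m + 1) p))
           \<and> (\<not> inI Q R a \<longrightarrow> occ_inside (len b) q (len bhat) p))"
proof -
  have "0 \<le> m" using \<open>-1 \<le> m\<close> \<open>even m\<close> by (cases "m = -1") auto
  note sigma = outside_I_iff_inside_sigma[OF assms(1) \<open>0 \<le> m\<close> assms(3,4)]
  note pi = outside_I_iff_inside_pi[OF assms(1) \<open>0 \<le> m\<close> assms(3,4)]
  have lengths: "len w' + len w = len b + len q + len a" if "cat w' w = cat b (cat q a)" for w' w b q a
    using arg_cong[OF that, of len] by (simp add: cat_def len_def)
  have sigma_part: "(\<not> inI Q R b \<longleftrightarrow> occ_inside (len b) q 0 (sigma Q R n (m + 1) p))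
      \<and> (\<not> inI Q R b \<longrightarrow> occ_inside (len b) q 0 p)"
    if "p \<in> Gamma Q R n" "q \<in> Gamma Q R m" "composable Q b (cat q a)" "cat p ahat = cat b (cat q a)"
    for p ahat b q a
    using sigma[OF that] unfolding occ_inside_def by auto
  have pi_part: "(\<not> inI Q R a \<longleftrightarrow> occ_inside (len b) q (len bhat + len p - len (pi_amb Q R n (m + 1) p))
                                      (pi_amb Q R n (m + 1) p))
      \<and> (\<not> inI Q R a \<longrightarrow> occ_inside (len b) q (len bhat) p)"
    if "p \<in> Gamma Q R n" "q \<in> Gamma Q R m" "composable Q q a" "cat bhat p = cat b (cat q a)"
    for p bhat b q a
    using pi[OF that] lengths[OF that(4)] unfolding occ_inside_def by auto
  show ?thesis
    using sigma_part pi_part by blast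
qed

end
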